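(* Let $\mathcal{M}$ be either $\mathcal{M}^{inj}$ or $\mathcal{M}^{gen}$. A clustering functor $\mathfrak{C}$ on $\mathcal{M}$ is excisive if and only if it is representable.
   Context: $\mathcal{M}^{gen}$ is the category whose objects are finite metric spaces and whose morphisms $f:(X,d_X)\to(Y,d_Y)$ are distance non-increasing maps ($d_Y(f(x),f(x'))\leq d_X(x,x')$ for all $x,x'$); $\mathcal{M}^{inj}$ has the same objects and as morphisms the injective distance non-increasing maps. For a set map $f:X\to Y$ and a partition $P_Y$ of $Y$, $f^*(P_Y)$ is the partition of $X$ whose blocks are the nonempty sets $f^{-1}(B)$, $B$ a block of $P_Y$. A clustering functor on $\mathcal{M}$ is a rule $\mathfrak{C}$ assigning to every finite metric space $(X,d_X)$ a partition $\mathfrak{C}(X,d_X)$ of $X$ such that for every morphism $f:(X,d_X)\to(Y,d_Y)$ in $\mathcal{M}$, $\mathfrak{C}(X,d_X)$ refines $f^*(\mathfrak{C}(Y,d_Y))$. $\mathfrak{C}$ is excisive if for every finite metric space $(X,d_X)$ and every block $B$ of $\mathfrak{C}(X,d_X)$, $\mathfrak{C}(B,d_X|_{B\times B})$ is the partition of $B$ with the single block $B$. For a collection $\Omega$ of finite metric spaces, $\mathfrak{C}^\Omega$ is the clustering functor on $\mathcal{M}$ defined as follows: for a finite metric space $X$, points $x,x'\in X$ lie in the same block of $\mathfrak{C}^\Omega(X)$ iff there exist $z_0,\ldots,z_k\in X$ with $z_0=x$, $z_k=x'$, spaces $\omega_1,\ldots,\omega_k\in\Omega$, points $\alpha_i,\beta_i\in\omega_i$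 and morphisms $f_i\in\mathrm{Mor}_{\mathcal{M}}(\omega_i,X)$ with $f_i(\alpha_i)=z_{i-1}$ and $f_i(\beta_i)=z_i$ for $i=1,\ldots,k$. $\mathfrak{C}$ is representable if $\mathfrak{C}=\mathfrak{C}^\Omega$ (i.e. they give the same partition of every finite metric space) for some collection $\Omega$ of finite metric spaces. *)

theory Defs
  imports Complex_Main "HOL-Library.Disjoint_Sets"
begin

text \<open>A finite metric space is represented by a finite carrier set of natural numbers
  together with a distance function that is a metric on the carrier.  Every finite
  metric space is isometric to such a space.\<close>

type_synonym space = "nat set \<times> (nat \<Rightarrow> nat \<Rightarrow> real)"

definition fin_metric :: "nat set \<Rightarrow> (nat \<Rightarrow> nat \<Rightarrow> real) \<Rightarrow> bool" where
  "fin_metric X d \<longleftrightarrow> finite X \<and>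
     (\<forall>x\<in>X. \<forall>y\<in>X. d x y \<ge> 0 \<and> (d x y = 0 \<longleftrightarrow> x = y) \<and> d x y = d y x) \<and>
     (\<forall>x\<in>X. \<forall>y\<in>X. \<forall>z\<in>X. d x z \<le> d x y + d y z)"

datatype category = Gen | Inj

definition mor :: "category \<Rightarrow> nat set \<Rightarrow> (nat \<Rightarrow> nat \<Rightarrow> real) \<Rightarrow> nat set \<Rightarrow> (nat \<Rightarrow> nat \<Rightarrow> real)
                    \<Rightarrow> (nat \<Rightarrow> nat) \<Rightarrow> bool" where
  "mor M X dX Y dY f \<longleftrightarrow> f ` X \<subseteq> Y \<and>
     (\<forall>x\<in>X. \<forall>x'\<in>X. dY (f x) (f x') \<le> dX x x') \<and>
     (M = Inj \<longrightarrow> inj_on f X)"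

definition refines :: "nat set set \<Rightarrow> nat set set \<Rightarrow> bool" where
  "refines P Q \<longleftrightarrow> (\<forall>A\<in>P. \<exists>B\<in>Q. A \<subseteq> B)"

definition pullback :: "nat set \<Rightarrow> (nat \<Rightarrow> nat) \<Rightarrow> nat set set \<Rightarrow> nat set set" where
  "pullback X f PY = {X \<inter> f -` B | B. B \<in> PY} - {{}}"

definition clustering_functor ::
  "category \<Rightarrow> (nat set \<Rightarrow> (nat \<Rightarrow> nat \<Rightarrow> real) \<Rightarrow> nat set set) \<Rightarrow> bool" where
  "clustering_functor M C \<longleftrightarrow>
     (\<forall>X d. fin_metric X d \<longrightarrow> partition_on X (C X d)) \<and>
     (\<forall>X dX Y dY f. fin_metric X dX \<longrightarrow> fin_metric Y dY \<longrightarrow> mor M X dX Y dY f \<longrightarrow>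
        refines (C X dX) (pullback X f (C Y dY)))"

text \<open>Excisive: every block, with the restricted metric, is clustered into a single block.
  (The restriction of d to B \<times> B is represented by d itself with carrier B.)\<close>
definition excisive :: "(nat set \<Rightarrow> (nat \<Rightarrow> nat \<Rightarrow> real) \<Rightarrow> nat set set) \<Rightarrow> bool" where
  "excisive C \<longleftrightarrow> (\<forall>X d. fin_metric X d \<longrightarrow> (\<forall>B\<in>C X d. C B d = {B}))"

definition omega_step :: "category \<Rightarrow> space set \<Rightarrow> nat set \<Rightarrow> (nat \<Rightarrow> nat \<Rightarrow> real)
                          \<Rightarrow> nat \<Rightarrow> nat \<Rightarrow> bool" where
  "omega_step M \<Omega> X d x x' \<longleftrightarrow>
     (\<exists>W dW \<alpha> \<beta> f. (W, dW) \<in> \<Omega> \<and> \<alpha> \<in> W \<and> \<beta> \<in> W \<and> mor M W dW X d f \<and>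
        f \<alpha> = x \<and> f \<beta> = x')"

definition omega_rel :: "category \<Rightarrow> space set \<Rightarrow> nat set \<Rightarrow> (nat \<Rightarrow> nat \<Rightarrow> real)
                         \<Rightarrow> (nat \<times> nat) set" where
  "omega_rel M \<Omega> X d = {(x, x'). x \<in> X \<and> x' \<in> X \<and> (omega_step M \<Omega> X d)\<^sup>*\<^sup>* x x'}"

definition C_Omega :: "category \<Rightarrow> space set \<Rightarrow> nat set \<Rightarrow> (nat \<Rightarrow> nat \<Rightarrow> real) \<Rightarrow> nat set set" where
  "C_Omega M \<Omega> X d = X // omega_rel M \<Omega> X d"

definition representable ::
  "category \<Rightarrow> (nat set \<Rightarrow> (nat \<Rightarrow> nat \<Rightarrow> real) \<Rightarrow> nat set set) \<Rightarrow> bool" where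
  "representable M C \<longleftrightarrow>
     (\<exists>\<Omega>. (\<forall>W dW. (W, dW) \<in> \<Omega> \<longrightarrow> fin_metric W dW) \<and>
          (\<forall>X d. fin_metric X d \<longrightarrow> C X d = C_Omega M \<Omega> X d))"

end

theory Submission
  imports Defs
begin

text \<open>If C is excisive, its blocks (with the restricted metrics) form a representing
  collection: the inclusion of a block into X witnesses that its points are chained, and by
  functoriality a morphism out of a block, which C clusters as a single block, lands in a single
  block of \<open>C X d\<close>. Conversely, a block of \<open>C_Omega\<close> is closed under chain steps, so every
  morphism witnessing a step from inside the block corestricts to it; hence the block is connected
  by chains inside itself, which is excisiveness.\<close>

lemma fin_metric_subset: "fin_metric X d \<Longrightarrow> B \<subseteq> X \<Longrightarrow> fin_metric B d"
  unfolding fin_metric_def by (meson finite_subset subsetD)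

lemma mor_corestrict: "mor M W dW X d f \<Longrightarrow> f ` W \<subseteq> B \<Longrightarrow> mor M W dW B d f"
  unfolding mor_def by blast

lemma mor_inclusion: "B \<subseteq> X \<Longrightarrow> mor M B d X d id"
  unfolding mor_def by auto

lemma symp_omega_step: "symp (omega_step M \<Omega> X d)"
  unfolding omega_step_def symp_def by blast

lemma omega_step_mem: "omega_step M \<Omega> X d a b \<Longrightarrow> a \<in> X \<and> b \<in> X"
  unfolding omega_step_def mor_def by blast

lemma equiv_omega_rel: "equiv X (omega_rel M \<Omega> X d)"
  unfolding omega_rel_def
  by (intro equivI refl_onI symI transI)
     (auto dest: sympD[OF symp_rtranclp[OF symp_omega_step]])

lemma C_Omega_blockE:
  assumes "B \<in> C_Omega M \<Omega> X d"
  obtains x where "x \<in> X" "B = {y \<in> X. (omega_step M \<Omega> X d)\<^sup>*\<^sup>* x y}"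
  using assms unfolding C_Omega_def omega_rel_def by (auto elim!: quotientE)

lemma C_Omega_block_subset: "B \<in> C_Omega M \<Omega> X d \<Longrightarrow> B \<subseteq> X"
  by (elim C_Omega_blockE) auto

lemma C_Omega_block_closed:
  assumes "B \<in> C_Omega M \<Omega> X d" "a \<in> B" "omega_step M \<Omega> X d a b"
  shows "b \<in> B"
  using assms(1) by (rule C_Omega_blockE) (use assms omega_step_mem in auto)

lemma omega_step_restrict_block:
  assumes B: "B \<in> C_Omega M \<Omega> X d" and a: "a \<in> B" and step: "omega_step M \<Omega> X d a b"
  shows "omega_step M \<Omega> B d a b"
proof -
  obtain W dW \<alpha> \<beta> f where w: "(W, dW) \<in> \<Omega>" "\<alpha> \<in> W" "\<beta> \<in> W" "mor M W dW X d f"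
    "f \<alpha> = a" "f \<beta> = b"
    using step unfolding omega_step_def by blast
  have "f w \<in> B" if "w \<in> W" for w
  proof (rule C_Omega_block_closed[OF B a])
    show "omega_step M \<Omega> X d a (f w)"
      unfolding omega_step_def using w that by blast
  qed
  then have "mor M W dW B d f"
    using mor_corestrict[OF w(4)] by blast
  then show ?thesis
    unfolding omega_step_def using w by blast
qed

lemma C_Omega_block_chain:
  assumes B: "B \<in> C_Omega M \<Omega> X d" and a: "a \<in> B" and b: "b \<in> B"
  shows "(omega_step M \<Omega> B d)\<^sup>*\<^sup>* a b"
proof -
  have "(a, b) \<in> omega_rel M \<Omega> X d"
    using B a b equiv_omega_rel unfolding C_Omega_def
    by (metis quotient_eq_iff)
  then have "(omega_step M \<Omega> X d)\<^sup>*\<^sup>* a b"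
    unfolding omega_rel_def by simp
  then show ?thesis
  proof (induction rule: rtranclp_induct)
    case (step y z)
    have "y \<in> B"
      using step.hyps(1) a C_Omega_block_closed[OF B]
      by (induction rule: rtranclp_induct) auto
    then show ?case
      using step omega_step_restrict_block[OF B] by (meson rtranclp.rtrancl_into_rtrancl)
  qed simp
qed

lemma C_Omega_block_single:
  assumes "B \<in> C_Omega M \<Omega> X d"
  shows "C_Omega M \<Omega> B d = {B}"
proof -
  have "omega_rel M \<Omega> B d = B \<times> B"
    using C_Omega_block_chain[OF assms] unfolding omega_rel_def by auto
  moreover have "B \<noteq> {}"
    using assms equiv_omega_rel unfolding C_Omega_def by (metis in_quotient_imp_non_empty)
  ultimately show ?thesis
    unfolding C_Omega_def quotient_def by auto
qed

lemma representable_imp_excisive: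
  assumes "representable M C"
  shows "excisive C"
  unfolding excisive_def
proof (intro allI impI ballI)
  obtain \<Omega> where rep: "\<And>X d. fin_metric X d \<Longrightarrow> C X d = C_Omega M \<Omega> X d"
    using assms unfolding representable_def by blast
  fix X d B
  assume "fin_metric X d" and "B \<in> C X d"
  then have B: "B \<in> C_Omega M \<Omega> X d"
    using rep by simp
  then have "fin_metric B d"
    using \<open>fin_metric X d\<close> C_Omega_block_subset fin_metric_subset by blast
  then show "C B d = {B}"
    using rep C_Omega_block_single[OF B] by simp
qed

definition cluster_blocks :: "(nat set \<Rightarrow> (nat \<Rightarrow> nat \<Rightarrow> real) \<Rightarrow> nat set set) \<Rightarrow> space set" where
  "cluster_blocks C = {(B, d) | X d B. fin_metric X d \<and> B \<in> C X d}"

lemma clustering_functor_partition: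
  "clustering_functor M C \<Longrightarrow> fin_metric X d \<Longrightarrow> partition_on X (C X d)"
  unfolding clustering_functor_def by blast

lemma clustering_functor_refines:
  "clustering_functor M C \<Longrightarrow> fin_metric X dX \<Longrightarrow> fin_metric Y dY \<Longrightarrow> mor M X dX Y dY f
    \<Longrightarrow> refines (C X dX) (pullback X f (C Y dY))"
  unfolding clustering_functor_def by simp

lemma clustering_functor_image_in_block:
  assumes C: "clustering_functor M C" and W: "fin_metric W dW" and X: "fin_metric X d"
    and f: "mor M W dW X d f" and single: "C W dW = {W}"
  obtains B where "B \<in> C X d" "f ` W \<subseteq> B"
proof -
  have "refines (C W dW) (pullback W f (C X d))"
    using C W X f by (rule clustering_functor_refines)
  then have "refines {W} (pullback W f (C X d))"
    using single by simp
  then obtain A where "A \<in> pullback W f (C X d)" "W \<subseteq> A"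
    unfolding refines_def by blast
  then obtain B where "B \<in> C X d" "W \<subseteq> f -` B"
    unfolding pullback_def by auto
  then show thesis
    using that by blast
qed

lemma cluster_blocks_fin_metric:
  assumes C: "clustering_functor M C" and W: "(W, dW) \<in> cluster_blocks C"
  shows "fin_metric W dW"
proof -
  obtain Y where Y: "fin_metric Y dW" "W \<in> C Y dW"
    using W unfolding cluster_blocks_def by blast
  then have "W \<subseteq> Y"
    using clustering_functor_partition[OF C] by (auto simp: partition_on_def)
  then show ?thesis
    using Y(1) fin_metric_subset by blast
qed

lemma excisive_cluster_blocks_single:
  "excisive C \<Longrightarrow> (W, dW) \<in> cluster_blocks C \<Longrightarrow> C W dW = {W}"
  unfolding excisive_def cluster_blocks_def by blast

lemma quotient_rtranclp_eq_partition:
  assumes P: "partition_on X P"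
    and step_in_block: "\<And>a b. S a b \<Longrightarrow> \<exists>p\<in>P. a \<in> p \<and> b \<in> p"
    and block_steps: "\<And>p a b. p \<in> P \<Longrightarrow> a \<in> p \<Longrightarrow> b \<in> p \<Longrightarrow> S a b"
  shows "X // {(x, y). x \<in> X \<and> y \<in> X \<and> S\<^sup>*\<^sup>* x y} = P"
proof -
  have chain_in_block: "y \<in> p" if "S\<^sup>*\<^sup>* x y" "p \<in> P" "x \<in> p" for x y p
    using that(1)
  proof (induction rule: rtranclp_induct)
    case (step y z)
    then obtain q where "q \<in> P" "y \<in> q" "z \<in> q"
      using step_in_block by blast
    with step.IH \<open>p \<in> P\<close> have "q = p"
      using partition_onD2[OF P] by (auto simp: disjoint_def)
    with \<open>z \<in> q\<close> show ?case
      by simp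
  qed (use that in simp)
  have "{(x, y). x \<in> X \<and> y \<in> X \<and> S\<^sup>*\<^sup>* x y} = {(x, y). \<exists>p\<in>P. x \<in> p \<and> y \<in> p}"
  proof (intro set_eqI iffI)
    fix xy
    assume "xy \<in> {(x, y). x \<in> X \<and> y \<in> X \<and> S\<^sup>*\<^sup>* x y}"
    then obtain x y where xy: "xy = (x, y)" "x \<in> X" "S\<^sup>*\<^sup>* x y"
      by blast
    moreover obtain p where "p \<in> P" "x \<in> p"
      using partition_onD1[OF P] xy(2) by blast
    ultimately show "xy \<in> {(x, y). \<exists>p\<in>P. x \<in> p \<and> y \<in> p}"
      using chain_in_block[of x y] by auto
  next
    fix xy
    assume "xy \<in> {(x, y). \<exists>p\<in>P. x \<in> p \<and> y \<in> p}"
    then obtain x y p where "xy = (x, y)" "p \<in> P" "x \<in> p" "y \<in> p"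
      by blast
    moreover have "S\<^sup>*\<^sup>* x y"
      using calculation(2-4) by (intro r_into_rtranclp block_steps)
    ultimately show "xy \<in> {(x, y). x \<in> X \<and> y \<in> X \<and> S\<^sup>*\<^sup>* x y}"
      using partition_onD1[OF P] by blast
  qed
  then show ?thesis
    using partition_on_eq_quotient[OF P] by simp
qed

lemma excisive_C_Omega_cluster_blocks:
  assumes C: "clustering_functor M C" and exc: "excisive C" and X: "fin_metric X d"
  shows "C_Omega M (cluster_blocks C) X d = C X d"
  unfolding C_Omega_def omega_rel_def
proof (rule quotient_rtranclp_eq_partition)
  show P: "partition_on X (C X d)"
    using C X by (rule clustering_functor_partition)
  show "\<exists>p\<in>C X d. a \<in> p \<and> b \<in> p" if step: "omega_step M (cluster_blocks C) X d a b" for a b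
  proof -
    obtain W dW \<alpha> \<beta> f where w: "(W, dW) \<in> cluster_blocks C" "\<alpha> \<in> W" "\<beta> \<in> W"
      "mor M W dW X d f" "f \<alpha> = a" "f \<beta> = b"
      using step unfolding omega_step_def by blast
    obtain p where "p \<in> C X d" "f ` W \<subseteq> p"
      using clustering_functor_image_in_block[OF C cluster_blocks_fin_metric[OF C w(1)] X w(4)]
        excisive_cluster_blocks_single[OF exc w(1)] by blast
    then show ?thesis
      using w by blast
  qed
  show "omega_step M (cluster_blocks C) X d a b" if "p \<in> C X d" "a \<in> p" "b \<in> p" for p a b
  proof -
    have "(p, d) \<in> cluster_blocks C"
      using X that(1) unfolding cluster_blocks_def by blast
    moreover have "mor M p d X d id"
      using P that(1) by (intro mor_inclusion) (auto simp: partition_on_def)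
    ultimately show ?thesis
      unfolding omega_step_def using that by (metis id_apply)
  qed
qed

lemma excisive_imp_representable:
  assumes C: "clustering_functor M C" and exc: "excisive C"
  shows "representable M C"
  unfolding representable_def
proof (intro exI conjI allI impI)
  show "fin_metric W dW" if "(W, dW) \<in> cluster_blocks C" for W dW
    using C that by (rule cluster_blocks_fin_metric)
next
  fix X d
  assume "fin_metric X d"
  then show "C X d = C_Omega M (cluster_blocks C) X d"
    using excisive_C_Omega_cluster_blocks[OF C exc] by simp
qed

theorem mainTheorem3:
  fixes M :: category
    and C :: "nat set \<Rightarrow> (nat \<Rightarrow> nat \<Rightarrow> real) \<Rightarrow> nat set set"
  assumes "clustering_functor M C"
  shows "excisive C \<longleftrightarrow> representable M C"
  using excisive_imp_representable[OF assms] representable_imp_excisive by blast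

end
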